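(* Let $G=(V,E)$ be a finite simple graph and $T\geq1$ an integer. If $(x,y,z)$ is a feasible solution of the Time Step Model $\mathrm{TSM}(G,T)$, then $C=\{v\in V\colon x^0_v=1\}$ is a zero forcing set of $G$ that is the initial set of some zero forcing game in $\mathcal{Z}(G,T)$, and $\mathrm{pt}(G,C)=\sum_{t\in[T]}z^t$.
   Context: Zero forcing: $n=|V|$, $N(u)$ is the neighborhood of $u$, $d(u)=|N(u)|$. Under the standard color change rule, a filled vertex $u$ can force a non-filled vertex $v$ if $v$ is the only non-filled neighbor of $u$. A zero forcing game on $G$ with initial set $C\subseteq V$ consists of sets $C^{(0)}=C^{[0]}=C$, sets $C^{(t)}$ (vertices forced at step $t$) with $C^{[t]}=C^{[t-1]}\cup C^{(t)}$, and a collection $\phi(C)$ of forces $u\to v$, such that every vertex lies in exactly one $C^{(t)}$, and each $v\in C^{(t)}$, $t\geq1$, is forced by exactly one neighbor $u$ such that $u$ and all neighbors of $u$ other than $v$ lie in $C^{[t-1]}$. $C$ is a zero forcing set if repeated forcing eventually fills all of $V$. The propagation time $\mathrm{pt}(G,C)$ is the smallest $t^*$ with $C^{[t^*]}=V$ when at each step all possible forces are applied simultaneously, i.e. $C^{(t)}$ is the set of all $v\notin C^{[t-1]}$ for which some $u\in C^{[t-1]}$ has $v$ as its unique neighbor outside $C^{[t-1]}$ ($\mathrm{pt}(G,C)=\infty$ if $C$ is not a zero forcing set). Here $\mathcal{Z}(G,T)$ denotes the family of zero forcing games on $G$ whose initial set is a zero forcing set, which use at most $T$ time steps, and in which at each time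 step all possible forces are applied (in the sense just described). Time Step Model: $A$ is the set of arcs containing $(u,v)$ and $(v,u)$ for each edge $\{u,v\}$, $[T]=\{1,\dots,T\}$. $\mathrm{TSM}(G,T)$ has binary variables $x^t_v$ ($v\in V$, $t\in\{0,\dots,T\}$), $y^t_a$ ($a\in A$, $t\in[T]$), $z^t$ ($t\in[T]$), with constraints: (1) $x^0_v+\sum_{t\in[T]}\sum_{a=(u,v)\in A}y^t_a=1$ for all $v$; (2) $y^t_a\leq x^{t-1}_u$ for all $a=(u,v)\in A$, $t\in[T]$; (3) $y^t_a\leq x^{t-1}_w$ for all $a=(u,v)\in A$, $w\in N(u)\setminus\{v\}$, $t\in[T]$; (4) $x^t_v=x^{t-1}_v+\sum_{a=(u,v)\in A}y^t_a$ for all $v$, $t\in[T]$; (5) $x^{t-1}_u-x^{t-1}_v+\sum_{w\in N(u)\setminus\{v\}}x^{t-1}_w\leq\sum_{a=(w,v)\in A}y^t_a+d(u)-1$ for all $(u,v)\in A$, $t\in[T]$; (6) $\frac1n\sum_{v\in V}(x^t_v-x^{t-1}_v)-z^t\leq0$ for all $t\in[T]$; (7) $z^t-\sum_{v\in V}(x^t_v-x^{t-1}_v)\leq 0$ for all $t\in[T]$. Its objective is to minimize $\sum_v x^0_v$. A feasible solution is one satisfying all constraints. *)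

theory Defs
  imports Main "HOL-Library.Extended_Nat"
begin

definition simple_graph :: "'a set \<Rightarrow> ('a \<Rightarrow> 'a \<Rightarrow> bool) \<Rightarrow> bool" where
  "simple_graph V E \<longleftrightarrow> finite V \<and> (\<forall>u v. E u v \<longrightarrow> u \<in> V \<and> v \<in> V)
     \<and> (\<forall>u v. E u v \<longrightarrow> E v u) \<and> (\<forall>u. \<not> E u u)"

definition nbhd :: "'a set \<Rightarrow> ('a \<Rightarrow> 'a \<Rightarrow> bool) \<Rightarrow> 'a \<Rightarrow> 'a set" where
  "nbhd V E u = {w \<in> V. E u w}"

definition deg :: "'a set \<Rightarrow> ('a \<Rightarrow> 'a \<Rightarrow> bool) \<Rightarrow> 'a \<Rightarrow> nat" where
  "deg V E u = card (nbhd V E u)"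

definition force_step :: "'a set \<Rightarrow> ('a \<Rightarrow> 'a \<Rightarrow> bool) \<Rightarrow> 'a set \<Rightarrow> 'a set" where
  "force_step V E S = {v \<in> V. v \<notin> S \<and> (\<exists>u\<in>S. nbhd V E u - S = {v})}"

definition filled :: "'a set \<Rightarrow> ('a \<Rightarrow> 'a \<Rightarrow> bool) \<Rightarrow> 'a set \<Rightarrow> nat \<Rightarrow> 'a set" where
  "filled V E C t = ((\<lambda>S. S \<union> force_step V E S) ^^ t) C"

definition zero_forcing_set :: "'a set \<Rightarrow> ('a \<Rightarrow> 'a \<Rightarrow> bool) \<Rightarrow> 'a set \<Rightarrow> bool" where
  "zero_forcing_set V E C \<longleftrightarrow> C \<subseteq> V \<and> (\<exists>t. filled V E C t = V)"

definition pt :: "'a set \<Rightarrow> ('a \<Rightarrow> 'a \<Rightarrow> bool) \<Rightarrow> 'a set \<Rightarrow> enat" where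
  "pt V E C = (if zero_forcing_set V E C then enat (LEAST t. filled V E C t = V) else \<infinity>)"

text \<open>A zero forcing game with initial set C, given by the sets Cs t (= C^(t))
  and the collection of forces phi (pairs (u,v) meaning u forces v).
  Cb t is C^[t], the union of Cs s for s \<le> t.\<close>
definition Cb :: "(nat \<Rightarrow> 'a set) \<Rightarrow> nat \<Rightarrow> 'a set" where
  "Cb Cs t = (\<Union>s\<le>t. Cs s)"

definition zf_game :: "'a set \<Rightarrow> ('a \<Rightarrow> 'a \<Rightarrow> bool) \<Rightarrow> 'a set \<Rightarrow> (nat \<Rightarrow> 'a set) \<Rightarrow> ('a \<times> 'a) set \<Rightarrow> bool" where
  "zf_game V E C Cs phi \<longleftrightarrow>
     C \<subseteq> V \<and> Cs 0 = C \<and> (\<forall>t. Cs t \<subseteq> V) \<and>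
     (\<forall>v\<in>V. \<exists>!t. v \<in> Cs t) \<and>
     (\<forall>(u,v)\<in>phi. \<exists>t\<ge>1. v \<in> Cs t) \<and>
     (\<forall>t\<ge>1. \<forall>v\<in>Cs t. \<exists>!u. (u,v) \<in> phi \<and> E u v \<and>
          u \<in> Cb Cs (t-1) \<and> nbhd V E u - {v} \<subseteq> Cb Cs (t-1))"

definition zf_games_Z :: "'a set \<Rightarrow> ('a \<Rightarrow> 'a \<Rightarrow> bool) \<Rightarrow> nat \<Rightarrow> ('a set \<times> (nat \<Rightarrow> 'a set) \<times> ('a \<times> 'a) set) set" where
  "zf_games_Z V E T = {(C, Cs, phi). zf_game V E C Cs phi \<and> zero_forcing_set V E C \<and>
      Cb Cs T = V \<and>
      (\<forall>t\<ge>1. Cs t = force_step V E (Cb Cs (t-1)))}"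

text \<open>The sum over arcs (u,v) entering v is the sum over u in N(v).\<close>
definition TSM_feasible :: "'a set \<Rightarrow> ('a \<Rightarrow> 'a \<Rightarrow> bool) \<Rightarrow> nat \<Rightarrow>
    ('a \<Rightarrow> nat \<Rightarrow> real) \<Rightarrow> ('a \<Rightarrow> 'a \<Rightarrow> nat \<Rightarrow> real) \<Rightarrow> (nat \<Rightarrow> real) \<Rightarrow> bool" where
  "TSM_feasible V E T x y z \<longleftrightarrow>
    (\<forall>v\<in>V. \<forall>t\<in>{0..T}. x v t \<in> {0,1}) \<and>
    (\<forall>u\<in>V. \<forall>v\<in>V. E u v \<longrightarrow> (\<forall>t\<in>{1..T}. y u v t \<in> {0,1})) \<and>
    (\<forall>t\<in>{1..T}. z t \<in> {0,1}) \<and>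
    \<comment> \<open>(1)\<close>
    (\<forall>v\<in>V. x v 0 + (\<Sum>t\<in>{1..T}. \<Sum>u\<in>nbhd V E v. y u v t) = 1) \<and>
    \<comment> \<open>(2)\<close>
    (\<forall>u\<in>V. \<forall>v\<in>V. E u v \<longrightarrow> (\<forall>t\<in>{1..T}. y u v t \<le> x u (t-1))) \<and>
    \<comment> \<open>(3)\<close>
    (\<forall>u\<in>V. \<forall>v\<in>V. E u v \<longrightarrow> (\<forall>w\<in>nbhd V E u - {v}. \<forall>t\<in>{1..T}. y u v t \<le> x w (t-1))) \<and>
    \<comment> \<open>(4)\<close>
    (\<forall>v\<in>V. \<forall>t\<in>{1..T}. x v t = x v (t-1) + (\<Sum>u\<in>nbhd V E v. y u v t)) \<and>
    \<comment> \<open>(5)\<close>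
    (\<forall>u\<in>V. \<forall>v\<in>V. E u v \<longrightarrow> (\<forall>t\<in>{1..T}.
        x u (t-1) - x v (t-1) + (\<Sum>w\<in>nbhd V E u - {v}. x w (t-1))
          \<le> (\<Sum>w\<in>nbhd V E v. y w v t) + real (deg V E u) - 1)) \<and>
    \<comment> \<open>(6)\<close>
    (\<forall>t\<in>{1..T}. (1 / real (card V)) * (\<Sum>v\<in>V. x v t - x v (t-1)) - z t \<le> 0) \<and>
    \<comment> \<open>(7)\<close>
    (\<forall>t\<in>{1..T}. z t - (\<Sum>v\<in>V. x v t - x v (t-1)) \<le> 0)"

end

(*
  For a feasible solution, the sets x_filled t = {v. x v t = 1} evolve exactly like
  simultaneous forcing: constraints (2) and (3) admit only legal forces, and constraint (5)
  makes every legal force happen. Hence x_filled t is the set C^[t] reached from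
  C = x_filled 0 after t parallel steps, and constraint (1) gives x_filled T = V, so C is a
  zero forcing set and the parallel game (with one forcer chosen per forced vertex) lies in
  Z(G,T). Constraints (6) and (7) make z t the indicator of a change at step t, so the sum
  of the z t counts the steps before V is filled, which is pt(G,C).
*)

theory Submission
  imports Defs
begin

lemma filled_0 [simp]: "filled V E C 0 = C"
  by (simp add: filled_def)

lemma filled_Suc: "filled V E C (Suc t) = filled V E C t \<union> force_step V E (filled V E C t)"
  by (simp add: filled_def)

lemma filled_mono: "s \<le> t \<Longrightarrow> filled V E C s \<subseteq> filled V E C t"
  by (induction t) (auto simp: filled_Suc le_Suc_eq)

lemma filled_subset: "C \<subseteq> V \<Longrightarrow> filled V E C t \<subseteq> V"
  by (induction t) (auto simp: filled_Suc force_step_def)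

lemma filled_stable:
  "filled V E C (Suc t) = filled V E C t \<Longrightarrow> filled V E C (t + j) = filled V E C t"
  by (induction j) (simp_all add: filled_Suc)

lemma filled_Suc_neq_iff:
  assumes "C \<subseteq> V" and "filled V E C n = V"
  shows "filled V E C (Suc t) \<noteq> filled V E C t \<longleftrightarrow> t < (LEAST s. filled V E C s = V)"
    (is "_ \<longleftrightarrow> t < ?k")
proof
  assume changes: "filled V E C (Suc t) \<noteq> filled V E C t"
  show "t < ?k"
  proof (rule ccontr)
    assume "\<not> t < ?k"
    then have "V \<subseteq> filled V E C t"
      using LeastI[of "\<lambda>s. filled V E C s = V", OF assms(2)] filled_mono[of ?k t V E C] by auto
    then show False
      using changes filled_subset[OF assms(1), of E "Suc t"] filled_mono[of t "Suc t" V E C] by auto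
  qed
next
  assume "t < ?k"
  show "filled V E C (Suc t) \<noteq> filled V E C t"
  proof
    assume "filled V E C (Suc t) = filled V E C t"
    then have "filled V E C n \<subseteq> filled V E C t"
      using filled_stable[of V E C t n] filled_mono[of n "t + n" V E C] by simp
    then have "filled V E C t = V"
      using assms filled_subset by blast
    then have "?k \<le> t" by (rule Least_le)
    with \<open>t < ?k\<close> show False by simp
  qed
qed

lemma pt_eq_card_changes:
  assumes "C \<subseteq> V" and "filled V E C T = V"
  shows "pt V E C = enat (card {t \<in> {1..T}. filled V E C t \<noteq> filled V E C (t - 1)})"
proof -
  let ?k = "LEAST s. filled V E C s = V"
  have "?k \<le> T" using assms(2) by (rule Least_le)
  have "{t \<in> {1..T}. filled V E C t \<noteq> filled V E C (t - 1)} = {1..?k}"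
  proof (intro equalityI subsetI)
    fix t assume "t \<in> {t \<in> {1..T}. filled V E C t \<noteq> filled V E C (t - 1)}"
    then show "t \<in> {1..?k}"
      using filled_Suc_neq_iff[OF assms, of "t - 1"] by (cases t) auto
  next
    fix t assume "t \<in> {1..?k}"
    then show "t \<in> {t \<in> {1..T}. filled V E C t \<noteq> filled V E C (t - 1)}"
      using filled_Suc_neq_iff[OF assms, of "t - 1"] \<open>?k \<le> T\<close> by (cases t) auto
  qed
  moreover have "zero_forcing_set V E C"
    using assms by (auto simp: zero_forcing_set_def)
  ultimately show ?thesis by (simp add: pt_def)
qed

definition parallel_stages :: "'a set \<Rightarrow> ('a \<Rightarrow> 'a \<Rightarrow> bool) \<Rightarrow> 'a set \<Rightarrow> nat \<Rightarrow> 'a set" where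
  "parallel_stages V E C t = (if t = 0 then C else force_step V E (filled V E C (t - 1)))"

definition chosen_forcer :: "'a set \<Rightarrow> ('a \<Rightarrow> 'a \<Rightarrow> bool) \<Rightarrow> 'a set \<Rightarrow> nat \<Rightarrow> 'a \<Rightarrow> 'a" where
  "chosen_forcer V E C t v =
     (SOME u. u \<in> filled V E C (t - 1) \<and> nbhd V E u - filled V E C (t - 1) = {v})"

definition parallel_forces :: "'a set \<Rightarrow> ('a \<Rightarrow> 'a \<Rightarrow> bool) \<Rightarrow> 'a set \<Rightarrow> ('a \<times> 'a) set" where
  "parallel_forces V E C =
     {(chosen_forcer V E C t v, v) | t v. t \<ge> 1 \<and> v \<in> parallel_stages V E C t}"

lemma Cb_parallel_stages: "Cb (parallel_stages V E C) t = filled V E C t"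
proof (induction t)
  case 0
  then show ?case by (simp add: Cb_def parallel_stages_def)
next
  case (Suc t)
  have "Cb (parallel_stages V E C) (Suc t) = Cb (parallel_stages V E C) t \<union> parallel_stages V E C (Suc t)"
    by (auto simp: Cb_def atMost_Suc)
  also have "\<dots> = filled V E C t \<union> force_step V E (filled V E C t)"
    by (simp add: Suc.IH parallel_stages_def)
  finally show ?case by (simp add: filled_Suc)
qed

lemma parallel_stages_subset_filled: "parallel_stages V E C t \<subseteq> filled V E C t"
  using Cb_parallel_stages[of V E C t] by (auto simp: Cb_def)

lemma parallel_stages_unique:
  assumes "v \<in> parallel_stages V E C s" and "v \<in> parallel_stages V E C t"
  shows "s = t"
proof (rule ccontr)
  have fresh: "v \<notin> filled V E C (t' - 1)" if "s' < t'" "v \<in> parallel_stages V E C t'" for s' t'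
    using that by (auto simp: parallel_stages_def force_step_def)
  have early: "v \<in> filled V E C (t' - 1)" if "s' < t'" "v \<in> parallel_stages V E C s'" for s' t'
    using that parallel_stages_subset_filled filled_mono[of s' "t' - 1"] by fastforce
  assume "s \<noteq> t"
  then show False
    using assms fresh early by (metis linorder_neqE_nat)
qed

lemma chosen_forcer_forces:
  assumes "t \<ge> 1" and "v \<in> parallel_stages V E C t"
  shows "chosen_forcer V E C t v \<in> filled V E C (t - 1)
    \<and> nbhd V E (chosen_forcer V E C t v) - filled V E C (t - 1) = {v}"
proof -
  have "\<exists>u. u \<in> filled V E C (t - 1) \<and> nbhd V E u - filled V E C (t - 1) = {v}"
    using assms by (auto simp: parallel_stages_def force_step_def)
  then show ?thesis unfolding chosen_forcer_def by (rule someI_ex)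
qed

lemma zf_game_parallel:
  assumes "C \<subseteq> V" and "filled V E C n = V"
  shows "zf_game V E C (parallel_stages V E C) (parallel_forces V E C)"
  unfolding zf_game_def
proof (intro conjI)
  show "C \<subseteq> V" by fact
  show "parallel_stages V E C 0 = C" by (simp add: parallel_stages_def)
  show "\<forall>t. parallel_stages V E C t \<subseteq> V"
    using parallel_stages_subset_filled[of V E C] filled_subset[OF assms(1), of E] by blast
  show "\<forall>v\<in>V. \<exists>!t. v \<in> parallel_stages V E C t"
  proof
    fix v assume "v \<in> V"
    then have "v \<in> Cb (parallel_stages V E C) n"
      using assms(2) by (simp add: Cb_parallel_stages)
    then show "\<exists>!t. v \<in> parallel_stages V E C t"
      using parallel_stages_unique by (auto simp: Cb_def)
  qed
  show "\<forall>(u, v) \<in> parallel_forces V E C. \<exists>t\<ge>1. v \<in> parallel_stages V E C t"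
    by (auto simp: parallel_forces_def)
  show "\<forall>t\<ge>1. \<forall>v\<in>parallel_stages V E C t. \<exists>!u. (u, v) \<in> parallel_forces V E C \<and> E u v
          \<and> u \<in> Cb (parallel_stages V E C) (t - 1) \<and> nbhd V E u - {v} \<subseteq> Cb (parallel_stages V E C) (t - 1)"
  proof (intro allI impI ballI)
    fix t v assume "1 \<le> t" and v: "v \<in> parallel_stages V E C t"
    let ?u = "chosen_forcer V E C t v"
    have forces: "?u \<in> Cb (parallel_stages V E C) (t - 1)"
      "nbhd V E ?u - Cb (parallel_stages V E C) (t - 1) = {v}"
      using chosen_forcer_forces[OF \<open>1 \<le> t\<close> v] by (simp_all add: Cb_parallel_stages)
    show "\<exists>!u. (u, v) \<in> parallel_forces V E C \<and> E u v \<and> u \<in> Cb (parallel_stages V E C) (t - 1)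
            \<and> nbhd V E u - {v} \<subseteq> Cb (parallel_stages V E C) (t - 1)"
    proof (rule ex1I)
      show "(?u, v) \<in> parallel_forces V E C \<and> E ?u v \<and> ?u \<in> Cb (parallel_stages V E C) (t - 1)
          \<and> nbhd V E ?u - {v} \<subseteq> Cb (parallel_stages V E C) (t - 1)"
        using forces \<open>1 \<le> t\<close> v by (auto simp: parallel_forces_def nbhd_def)
    next
      fix u assume "(u, v) \<in> parallel_forces V E C \<and> E u v \<and> u \<in> Cb (parallel_stages V E C) (t - 1)
          \<and> nbhd V E u - {v} \<subseteq> Cb (parallel_stages V E C) (t - 1)"
      then show "u = ?u"
        using parallel_stages_unique[OF _ v] by (auto simp: parallel_forces_def)
    qed
  qed
qed

lemma parallel_game_in_zf_games_Z:
  assumes "C \<subseteq> V" and "filled V E C T = V"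
  shows "(C, parallel_stages V E C, parallel_forces V E C) \<in> zf_games_Z V E T"
  using assms zf_game_parallel[OF assms]
  by (auto simp: zf_games_Z_def zero_forcing_set_def Cb_parallel_stages parallel_stages_def)

locale tsm_solution =
  fixes V :: "'a set" and E :: "'a \<Rightarrow> 'a \<Rightarrow> bool" and T :: nat
    and x :: "'a \<Rightarrow> nat \<Rightarrow> real" and y :: "'a \<Rightarrow> 'a \<Rightarrow> nat \<Rightarrow> real" and z :: "nat \<Rightarrow> real"
  assumes graph: "simple_graph V E" and feasible: "TSM_feasible V E T x y z"
begin

abbreviation inflow :: "'a \<Rightarrow> nat \<Rightarrow> real" where
  "inflow v t \<equiv> \<Sum>u\<in>nbhd V E v. y u v t"

definition x_filled :: "nat \<Rightarrow> 'a set" where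
  "x_filled t = {v \<in> V. x v t = 1}"

lemma finite_V: "finite V"
  using graph by (simp add: simple_graph_def)

lemma finite_nbhd: "finite (nbhd V E u)"
  using finite_V by (simp add: nbhd_def)

lemma edge_in_V: "E u v \<Longrightarrow> u \<in> V \<and> v \<in> V"
  using graph by (simp add: simple_graph_def)

lemma in_nbhd_iff: "u \<in> nbhd V E v \<longleftrightarrow> E u v"
  using graph by (auto simp: simple_graph_def nbhd_def)

lemma x_binary:
  assumes "v \<in> V" and "t \<le> T"
  shows "x v t = 0 \<or> x v t = 1"
proof -
  have "\<forall>v\<in>V. \<forall>t\<in>{0..T}. x v t \<in> {0,1}"
    using feasible unfolding TSM_feasible_def by (elim conjE) assumption
  then show ?thesis using assms by auto
qed

lemma y_binary:
  assumes "E u v" and "Suc t \<le> T"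
  shows "y u v (Suc t) = 0 \<or> y u v (Suc t) = 1"
proof -
  have "\<forall>u\<in>V. \<forall>v\<in>V. E u v \<longrightarrow> (\<forall>t\<in>{1..T}. y u v t \<in> {0,1})"
    using feasible unfolding TSM_feasible_def by (elim conjE) assumption
  then show ?thesis using assms edge_in_V[OF assms(1)] by auto
qed

lemma z_binary:
  assumes "Suc t \<le> T"
  shows "z (Suc t) = 0 \<or> z (Suc t) = 1"
proof -
  have "\<forall>t\<in>{1..T}. z t \<in> {0,1}"
    using feasible unfolding TSM_feasible_def by (elim conjE) assumption
  then show ?thesis using assms by auto
qed

lemma x_0_plus_inflow: "v \<in> V \<Longrightarrow> x v 0 + (\<Sum>t\<in>{1..T}. inflow v t) = 1"
  using feasible by (simp add: TSM_feasible_def)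

lemma forcer_filled:
  assumes "E u v" and "Suc t \<le> T"
  shows "y u v (Suc t) \<le> x u t"
proof -
  have "\<forall>u\<in>V. \<forall>v\<in>V. E u v \<longrightarrow> (\<forall>t\<in>{1..T}. y u v t \<le> x u (t-1))"
    using feasible unfolding TSM_feasible_def by (elim conjE) assumption
  moreover have "Suc t \<in> {1..T}" using assms(2) by simp
  ultimately show ?thesis using assms(1) edge_in_V[OF assms(1)] by (metis diff_Suc_1)
qed

lemma forcer_nbhd_filled:
  assumes "E u v" and "w \<in> nbhd V E u - {v}" and "Suc t \<le> T"
  shows "y u v (Suc t) \<le> x w t"
proof -
  have "\<forall>u\<in>V. \<forall>v\<in>V. E u v \<longrightarrow> (\<forall>w\<in>nbhd V E u - {v}. \<forall>t\<in>{1..T}. y u v t \<le> x w (t-1))"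
    using feasible unfolding TSM_feasible_def by (elim conjE) assumption
  moreover have "Suc t \<in> {1..T}" using assms(3) by simp
  ultimately show ?thesis using assms(1,2) edge_in_V[OF assms(1)] by (metis diff_Suc_1)
qed

lemma x_Suc:
  assumes "v \<in> V" and "Suc t \<le> T"
  shows "x v (Suc t) = x v t + inflow v (Suc t)"
proof -
  have "\<forall>v\<in>V. \<forall>t\<in>{1..T}. x v t = x v (t-1) + inflow v t"
    using feasible unfolding TSM_feasible_def by (elim conjE) assumption
  then show ?thesis using assms by fastforce
qed

lemma forcing_enforced:
  assumes "E u v" and "Suc t \<le> T"
  shows "x u t - x v t + (\<Sum>w\<in>nbhd V E u - {v}. x w t) \<le> inflow v (Suc t) + real (deg V E u) - 1"
proof -
  have "\<forall>u\<in>V. \<forall>v\<in>V. E u v \<longrightarrow> (\<forall>t\<in>{1..T}.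
        x u (t-1) - x v (t-1) + (\<Sum>w\<in>nbhd V E u - {v}. x w (t-1))
          \<le> inflow v t + real (deg V E u) - 1)"
    using feasible unfolding TSM_feasible_def by (elim conjE) assumption
  moreover have "Suc t \<in> {1..T}" using assms(2) by simp
  ultimately show ?thesis using assms(1) edge_in_V[OF assms(1)] by (metis diff_Suc_1)
qed

lemma z_lower:
  assumes "Suc t \<le> T"
  shows "(\<Sum>v\<in>V. x v (Suc t) - x v t) / real (card V) \<le> z (Suc t)"
proof -
  have "\<forall>t\<in>{1..T}. (1 / real (card V)) * (\<Sum>v\<in>V. x v t - x v (t-1)) - z t \<le> 0"
    using feasible unfolding TSM_feasible_def by (elim conjE) assumption
  from this[rule_format, of "Suc t"] show ?thesis using assms by simp
qed

lemma z_upper: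
  assumes "Suc t \<le> T"
  shows "z (Suc t) \<le> (\<Sum>v\<in>V. x v (Suc t) - x v t)"
proof -
  have "\<forall>t\<in>{1..T}. z t - (\<Sum>v\<in>V. x v t - x v (t-1)) \<le> 0"
    using feasible unfolding TSM_feasible_def by (elim conjE) assumption
  from this[rule_format, of "Suc t"] show ?thesis using assms by simp
qed

lemma inflow_nonneg:
  assumes "Suc t \<le> T"
  shows "0 \<le> inflow v (Suc t)"
  using y_binary[OF _ assms] by (intro sum_nonneg) (fastforce simp: in_nbhd_iff)

lemma x_le_x_Suc: "v \<in> V \<Longrightarrow> Suc t \<le> T \<Longrightarrow> x v t \<le> x v (Suc t)"
  using x_Suc[of v t] inflow_nonneg[of t v] by simp

lemma x_filled_mono_Suc:
  assumes "Suc t \<le> T"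
  shows "x_filled t \<subseteq> x_filled (Suc t)"
proof
  fix v assume "v \<in> x_filled t"
  then have "v \<in> V" and "x v t = 1" by (simp_all add: x_filled_def)
  then have "1 \<le> x v (Suc t)" using x_le_x_Suc[OF \<open>v \<in> V\<close> assms] by simp
  then show "v \<in> x_filled (Suc t)"
    using x_binary[OF \<open>v \<in> V\<close> assms] \<open>v \<in> V\<close> by (auto simp: x_filled_def)
qed

lemma x_filled_Suc_subset:
  assumes "Suc t \<le> T"
  shows "x_filled (Suc t) \<subseteq> x_filled t \<union> force_step V E (x_filled t)"
proof
  fix v assume "v \<in> x_filled (Suc t)"
  then have "v \<in> V" and "x v (Suc t) = 1" by (auto simp: x_filled_def)
  show "v \<in> x_filled t \<union> force_step V E (x_filled t)"
  proof (cases "v \<in> x_filled t")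
    case False
    then have "x v t = 0"
      using x_binary[OF \<open>v \<in> V\<close>, of t] \<open>v \<in> V\<close> assms by (auto simp: x_filled_def)
    then have "inflow v (Suc t) \<noteq> 0"
      using x_Suc[OF \<open>v \<in> V\<close> assms] \<open>x v (Suc t) = 1\<close> by simp
    then obtain u where "u \<in> nbhd V E v" and "y u v (Suc t) \<noteq> 0"
      by (meson sum.not_neutral_contains_not_neutral)
    then have "E u v" and forcing: "y u v (Suc t) = 1"
      using y_binary assms by (auto simp: in_nbhd_iff)
    have "x u t = 1"
      using forcer_filled[OF \<open>E u v\<close> assms] forcing x_binary[of u t] edge_in_V[OF \<open>E u v\<close>] assms
      by auto
    moreover have "x w t = 1" if "w \<in> nbhd V E u - {v}" for w
      using forcer_nbhd_filled[OF \<open>E u v\<close> that assms] forcing x_binary[of w t] that assms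
      by (auto simp: nbhd_def)
    ultimately have "u \<in> x_filled t" and "nbhd V E u - x_filled t = {v}"
      using \<open>E u v\<close> edge_in_V \<open>x v t = 0\<close> by (auto simp: x_filled_def nbhd_def)
    then show ?thesis using \<open>v \<in> V\<close> False by (auto simp: force_step_def)
  qed simp
qed

lemma force_step_subset_x_filled_Suc:
  assumes "Suc t \<le> T"
  shows "force_step V E (x_filled t) \<subseteq> x_filled (Suc t)"
proof
  fix v assume "v \<in> force_step V E (x_filled t)"
  then obtain u where "v \<in> V" "v \<notin> x_filled t" "u \<in> x_filled t"
    and forces: "nbhd V E u - x_filled t = {v}"
    by (auto simp: force_step_def)
  then have "x u t = 1" and "x v t = 0"
    using x_binary[OF \<open>v \<in> V\<close>, of t] assms by (auto simp: x_filled_def)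
  have "v \<in> nbhd V E u" using forces by blast
  then have "E u v" by (simp add: nbhd_def)
  have "nbhd V E u - {v} \<subseteq> x_filled t" using forces by blast
  then have "(\<Sum>w\<in>nbhd V E u - {v}. x w t) = (\<Sum>w\<in>nbhd V E u - {v}. 1)"
    by (intro sum.cong) (auto simp: x_filled_def)
  moreover have "deg V E u = Suc (card (nbhd V E u - {v}))"
    unfolding deg_def using finite_nbhd \<open>v \<in> nbhd V E u\<close> by (rule card.remove)
  ultimately have "1 \<le> inflow v (Suc t)"
    using forcing_enforced[OF \<open>E u v\<close> assms] \<open>x u t = 1\<close> \<open>x v t = 0\<close> by simp
  then have "x v (Suc t) = 1"
    using x_Suc[OF \<open>v \<in> V\<close> assms] \<open>x v t = 0\<close> x_binary[OF \<open>v \<in> V\<close> assms] by auto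
  then show "v \<in> x_filled (Suc t)" using \<open>v \<in> V\<close> by (simp add: x_filled_def)
qed

lemma x_filled_eq_filled: "t \<le> T \<Longrightarrow> x_filled t = filled V E (x_filled 0) t"
proof (induction t)
  case (Suc t)
  then have "x_filled (Suc t) = x_filled t \<union> force_step V E (x_filled t)"
    using x_filled_Suc_subset force_step_subset_x_filled_Suc x_filled_mono_Suc by blast
  then show ?case using Suc by (simp add: filled_Suc)
qed simp

lemma x_eq_x_0_plus_inflow:
  "v \<in> V \<Longrightarrow> t \<le> T \<Longrightarrow> x v t = x v 0 + (\<Sum>s\<in>{1..t}. inflow v s)"
  by (induction t) (simp_all add: x_Suc)

lemma x_filled_T: "x_filled T = V"
  using x_eq_x_0_plus_inflow[OF _ order_refl] x_0_plus_inflow by (auto simp: x_filled_def)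

lemma increment_eq_card:
  assumes "Suc t \<le> T"
  shows "(\<Sum>v\<in>V. x v (Suc t) - x v t) = real (card (x_filled (Suc t) - x_filled t))"
proof -
  have "x v (Suc t) - x v t = of_bool (v \<in> x_filled (Suc t) - x_filled t)" if "v \<in> V" for v
    using x_binary[OF that, of t] x_binary[OF that assms] x_le_x_Suc[OF that assms] that assms
    by (auto simp: x_filled_def)
  then have "(\<Sum>v\<in>V. x v (Suc t) - x v t) = (\<Sum>v\<in>V. of_bool (v \<in> x_filled (Suc t) - x_filled t))"
    by (rule sum.cong[OF refl])
  also have "\<dots> = real (card (V \<inter> {v. v \<in> x_filled (Suc t) - x_filled t}))"
    using finite_V by simp
  also have "V \<inter> {v. v \<in> x_filled (Suc t) - x_filled t} = x_filled (Suc t) - x_filled t"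
    by (auto simp: x_filled_def)
  finally show ?thesis .
qed

lemma z_Suc:
  assumes "Suc t \<le> T"
  shows "z (Suc t) = of_bool (x_filled (Suc t) \<noteq> x_filled t)"
proof (cases "x_filled (Suc t) = x_filled t")
  case True
  then show ?thesis
    using z_upper[OF assms] z_binary[OF assms] increment_eq_card[OF assms] by auto
next
  case False
  let ?new = "x_filled (Suc t) - x_filled t"
  have "?new \<noteq> {}" and "?new \<subseteq> V"
    using False x_filled_mono_Suc[OF assms] by (auto simp: x_filled_def)
  then have "0 < card ?new" and "0 < card V"
    using finite_V by (auto simp: card_gt_0_iff dest: finite_subset)
  then have "0 < real (card ?new) / real (card V)"
    by simp
  also have "\<dots> \<le> z (Suc t)"
    using z_lower[OF assms] by (simp add: increment_eq_card[OF assms])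
  finally show ?thesis using z_binary[OF assms] False by auto
qed

lemma sum_z_eq_card_changes:
  "(\<Sum>t\<in>{1..T}. z t) =
     real (card {t \<in> {1..T}. filled V E (x_filled 0) t \<noteq> filled V E (x_filled 0) (t - 1)})"
proof -
  have "z t = of_bool (filled V E (x_filled 0) t \<noteq> filled V E (x_filled 0) (t - 1))"
    if t: "t \<in> {1..T}" for t
  proof -
    obtain s where "t = Suc s" and "Suc s \<le> T" using t by (cases t) auto
    then show ?thesis using z_Suc x_filled_eq_filled[of s] x_filled_eq_filled[of "Suc s"] by simp
  qed
  then have "(\<Sum>t\<in>{1..T}. z t) =
      (\<Sum>t\<in>{1..T}. of_bool (filled V E (x_filled 0) t \<noteq> filled V E (x_filled 0) (t - 1)))"
    by (rule sum.cong[OF refl])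
  also have "\<dots> = real (card {t \<in> {1..T}. filled V E (x_filled 0) t \<noteq> filled V E (x_filled 0) (t - 1)})"
    by (simp add: Int_def)
  finally show ?thesis .
qed

end

theorem theorem4p2:
  fixes V :: "'a set" and E :: "'a \<Rightarrow> 'a \<Rightarrow> bool" and T :: nat
    and x :: "'a \<Rightarrow> nat \<Rightarrow> real" and y :: "'a \<Rightarrow> 'a \<Rightarrow> nat \<Rightarrow> real" and z :: "nat \<Rightarrow> real"
  assumes "simple_graph V E" and "T \<ge> 1" and "TSM_feasible V E T x y z"
  defines "C \<equiv> {v \<in> V. x v 0 = 1}"
  shows "zero_forcing_set V E C
    \<and> (\<exists>Cs phi. (C, Cs, phi) \<in> zf_games_Z V E T)
    \<and> (\<exists>k. pt V E C = enat k \<and> real k = (\<Sum>t\<in>{1..T}. z t))"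
proof -
  interpret tsm_solution V E T x y z
    using assms(1,3) by unfold_locales
  have "C = x_filled 0" by (simp add: C_def x_filled_def)
  then have "C \<subseteq> V" and filled_T: "filled V E C T = V"
    using x_filled_T x_filled_eq_filled[of T] by (auto simp: x_filled_def)
  then have "zero_forcing_set V E C"
    by (auto simp: zero_forcing_set_def)
  moreover have "(C, parallel_stages V E C, parallel_forces V E C) \<in> zf_games_Z V E T"
    using \<open>C \<subseteq> V\<close> filled_T by (rule parallel_game_in_zf_games_Z)
  moreover have "pt V E C = enat (card {t \<in> {1..T}. filled V E C t \<noteq> filled V E C (t - 1)})"
    using \<open>C \<subseteq> V\<close> filled_T by (rule pt_eq_card_changes)
  ultimately show ?thesis
    using sum_z_eq_card_changes \<open>C = x_filled 0\<close> by auto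
qed

end
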